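(* Let $r,K,\alpha,\phi,c,m_1,m_2,\lambda,a,d,\delta,\gamma,\sigma,\eta$ be positive constants with $\phi<1$ and $m_1>m_2$, and consider the system \[ \begin{cases} \dot X = rX\left(1-\frac{X}{K}\right)-\frac{\alpha XS}{c+X}-\frac{\phi\alpha XI}{c+X},\\[1mm] \dot S = \frac{m_1\alpha XS}{c+X}-\frac{\lambda AS}{a+A}-dS,\\[1mm] \dot I = \frac{m_2\phi\alpha XI}{c+X}+\frac{\lambda AS}{a+A}-(d+\delta)I,\\[1mm] \dot A = \gamma+\sigma(S+I)-\eta A. \end{cases} \] Let $M:=\max\{X(0),K\}$ and \[ \mathcal D:=\left\{(X,S,I,A)\in\mathbb R_+^4:\ 0\le X\le M,\ 0\le X+S+I\le \frac{(r+4d)M}{4d},\ 0\le A\le \frac{4rd+\sigma(r+4d)M}{4\eta rd}\right\}. \] Then every solution of the system that starts in $\mathcal D$ is uniformly bounded.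
   Context: $\mathbb R_+^4$ denotes the closed non-negative orthant. *)

theory Defs
  imports "HOL-Analysis.Analysis"
begin

definition regionD :: "real \<Rightarrow> real \<Rightarrow> real \<Rightarrow> real \<Rightarrow> real \<Rightarrow> (real \<times> real \<times> real \<times> real) set" where
  "regionD M r d \<sigma> \<eta> = {(x, s, i, a). x \<ge> 0 \<and> s \<ge> 0 \<and> i \<ge> 0 \<and> a \<ge> 0 \<and>
      x \<le> M \<and> x + s + i \<le> (r + 4*d) * M / (4*d) \<and>
      a \<le> (4*r*d + \<sigma>*(r + 4*d)*M) / (4*\<eta>*r*d)}"

end

theory Submission
  imports Defs
begin

(* The closed orthant is forward invariant: X, S and I satisfy f' = f g + p with g locally bounded
   and p >= 0 as long as the other components are nonnegative, and A' >= -\<eta> A near any time at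
   which S, I >= 0 because \<gamma> > 0. A comparison with exp (L t) keeps each component from crossing
   zero on a short interval, and real induction along the time axis propagates this to all t >= 0.
   Given positivity, X' <= 0 whenever X > K, so X <= M = max (X 0) K. In the weighted total
   W = X + (S + I) / m1 the predation terms cancel up to a nonpositive multiple of m1 - m2, so
   W' <= (r + d) X - d W <= (r + d) M - d W, which bounds W and hence S + I. Finally
   A' <= \<gamma> + \<sigma> m1 max W - \<eta> A bounds A. *)

lemma exp_weighted_le_if_deriv_ge_mult:
  fixes f f' :: "real \<Rightarrow> real"
  assumes "u \<le> v" and cont: "continuous_on {u..v} f"
    and deriv: "\<And>t. u < t \<Longrightarrow> t < v \<Longrightarrow> (f has_real_derivative f' t) (at t)"
    and ge: "\<And>t. u < t \<Longrightarrow> t < v \<Longrightarrow> L * f t \<le> f' t"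
  shows "exp (- L * u) * f u \<le> exp (- L * v) * f v"
proof (rule DERIV_nonneg_imp_increasing_open[OF \<open>u \<le> v\<close>])
  fix t assume t: "u < t" "t < v"
  have "((\<lambda>s. exp (- L * s) * f s) has_real_derivative exp (- L * t) * (f' t - L * f t)) (at t)"
    by (rule derivative_eq_intros deriv[OF t] refl | simp add: algebra_simps)+
  moreover have "0 \<le> exp (- L * t) * (f' t - L * f t)"
    using ge[OF t] by simp
  ultimately show "\<exists>y. ((\<lambda>s. exp (- L * s) * f s) has_real_derivative y) (at t) \<and> 0 \<le> y"
    by blast
qed (intro continuous_intros cont)

lemma nonneg_if_deriv_ge_mult_when_neg:
  fixes f f' :: "real \<Rightarrow> real"
  assumes "u \<le> v" and fu: "0 \<le> f u"
    and deriv: "\<And>t. t \<in> {u..v} \<Longrightarrow> (f has_real_derivative f' t) (at t within {u..v})"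
    and ge: "\<And>t. u < t \<Longrightarrow> t < v \<Longrightarrow> f t < 0 \<Longrightarrow> L * f t \<le> f' t"
  shows "0 \<le> f v"
proof (rule ccontr)
  assume fv: "\<not> 0 \<le> f v"
  have cont: "continuous_on {u..v} f"
    unfolding continuous_on_eq_continuous_within using deriv by (blast intro: DERIV_continuous)
  define Z where "Z = {u..v} \<inter> f -` {0..}"
  define t0 where "t0 = Sup Z"
  have "closed Z"
    unfolding Z_def by (rule continuous_closed_preimage[OF cont]) auto
  moreover have "u \<in> Z" "bdd_above Z"
    using \<open>u \<le> v\<close> fu by (auto simp: Z_def)
  ultimately have t0Z: "t0 \<in> Z" and "u \<le> t0"
    unfolding t0_def using closed_contains_Sup cSup_upper by blast+
  have "t0 < v"
    using t0Z fv by (cases "t0 = v") (auto simp: Z_def)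
  have neg: "f t < 0" if "t0 < t" "t \<le> v" for t
    using cSup_upper[of t Z] \<open>bdd_above Z\<close> \<open>u \<le> t0\<close> that by (force simp: Z_def t0_def)
  have "exp (- L * t0) * f t0 \<le> exp (- L * v) * f v"
  proof (rule exp_weighted_le_if_deriv_ge_mult[OF less_imp_le[OF \<open>t0 < v\<close>]])
    show "continuous_on {t0..v} f"
      using cont by (rule continuous_on_subset) (use \<open>u \<le> t0\<close> in auto)
    fix t assume t: "t0 < t" "t < v"
    have "at t within {u..v} = at t"
      using t \<open>u \<le> t0\<close> by (intro at_within_interior) auto
    then show "(f has_real_derivative f' t) (at t)"
      using deriv[of t] t \<open>u \<le> t0\<close> by auto
    show "L * f t \<le> f' t"
      using ge neg t \<open>u \<le> t0\<close> by auto
  qed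
  moreover have "0 \<le> exp (- L * t0) * f t0"
    using t0Z by (simp add: Z_def)
  moreover have "exp (- L * v) * f v < 0"
    using fv by (simp add: mult_pos_neg)
  ultimately show False
    by linarith
qed

lemma le_max_if_deriv_nonpos_above:
  fixes f f' :: "real \<Rightarrow> real"
  assumes deriv: "\<And>t. a \<le> t \<Longrightarrow> (f has_real_derivative f' t) (at t within {a..})"
    and nonpos: "\<And>t. a < t \<Longrightarrow> B < f t \<Longrightarrow> f' t \<le> 0"
    and "a \<le> t"
  shows "f t \<le> max (f a) B"
proof -
  have "0 \<le> max (f a) B - f t"
  proof (rule nonneg_if_deriv_ge_mult_when_neg
      [where f = "\<lambda>s. max (f a) B - f s" and f' = "\<lambda>s. - f' s" and L = 0])
    fix s assume "s \<in> {a..t}"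
    then show "((\<lambda>s. max (f a) B - f s) has_real_derivative - f' s) (at s within {a..t})"
      using deriv[of s] by (auto intro!: derivative_eq_intros intro: DERIV_subset)
  qed (use \<open>a \<le> t\<close> nonpos in auto)
  then show ?thesis
    by simp
qed

lemma eventually_nonneg_at_right:
  fixes f f' g :: "real \<Rightarrow> real"
  assumes "a \<le> t" and ft: "0 \<le> f t"
    and deriv: "\<And>s. a \<le> s \<Longrightarrow> (f has_real_derivative f' s) (at s within {a..})"
    and lim: "(g \<longlongrightarrow> l) (at_right t)"
    and ge: "\<forall>\<^sub>F s in at_right t. f s * g s \<le> f' s"
  shows "\<forall>\<^sub>F s in at_right t. 0 \<le> f s"
proof -
  have "\<forall>\<^sub>F s in at_right t. g s < l + 1 \<and> f s * g s \<le> f' s"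
    using order_tendstoD(2)[OF lim less_add_one] ge by eventually_elim auto
  then obtain b where "t < b"
    and b: "\<And>s. t < s \<Longrightarrow> s < b \<Longrightarrow> g s < l + 1 \<and> f s * g s \<le> f' s"
    unfolding eventually_at_right_field by blast
  have "0 \<le> f v" if "t < v" "v < b" for v
  proof (rule nonneg_if_deriv_ge_mult_when_neg[where f = f and f' = f' and L = "l + 1"])
    fix s assume "s \<in> {t..v}"
    then show "(f has_real_derivative f' s) (at s within {t..v})"
      using deriv[of s] \<open>a \<le> t\<close> by (auto intro: DERIV_subset)
  next
    fix s assume "t < s" "s < v" "f s < 0"
    then have "(l + 1) * f s \<le> f s * g s"
      using b[of s] \<open>v < b\<close> by (simp add: mult.commute mult_le_cancel_left_neg)
    then show "(l + 1) * f s \<le> f' s"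
      using b[of s] \<open>t < s\<close> \<open>s < v\<close> \<open>v < b\<close> by linarith
  qed (use that ft in auto)
  then show ?thesis
    unfolding eventually_at_right_field using \<open>t < b\<close> by blast
qed

lemma real_induct_right [consumes 1, case_names start left right]:
  fixes P :: "real \<Rightarrow> bool"
  assumes "a \<le> t"
    and start: "P a"
    and left: "\<And>t. a < t \<Longrightarrow> (\<And>s. a \<le> s \<Longrightarrow> s < t \<Longrightarrow> P s) \<Longrightarrow> P t"
    and right: "\<And>t. a \<le> t \<Longrightarrow> P t \<Longrightarrow> \<forall>\<^sub>F s in at_right t. P s"
  shows "P t"
proof (rule ccontr)
  assume "\<not> P t"
  define Bad where "Bad = {s. a \<le> s \<and> \<not> P s}"
  define t0 where "t0 = Inf Bad"
  have "Bad \<noteq> {}" "bdd_below Bad"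
    using \<open>\<not> P t\<close> \<open>a \<le> t\<close> by (auto simp: Bad_def bdd_below_def)
  then have "a \<le> t0" and before: "\<And>s. a \<le> s \<Longrightarrow> s < t0 \<Longrightarrow> P s"
    unfolding t0_def by (auto intro: cInf_greatest simp: Bad_def dest: cInf_lower[rotated])
  have "P t0"
    using start left[OF _ before] \<open>a \<le> t0\<close> by (cases "t0 = a") auto
  then obtain b where "t0 < b" and after: "\<And>s. t0 < s \<Longrightarrow> s < b \<Longrightarrow> P s"
    using right[OF \<open>a \<le> t0\<close>] unfolding eventually_at_right_field by blast
  have "b \<le> t0"
    unfolding t0_def
  proof (rule cInf_greatest[OF \<open>Bad \<noteq> {}\<close>])
    fix s assume "s \<in> Bad"
    then show "b \<le> s"
      using before after \<open>P t0\<close> by (fastforce simp: Bad_def not_less_iff_gr_or_eq)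
  qed
  then show False
    using \<open>t0 < b\<close> by simp
qed

lemma nonneg_if_nonneg_before:
  fixes f :: "real \<Rightarrow> real"
  assumes cont: "continuous_on {a..t} f" and "a < t"
    and before: "\<And>s. a \<le> s \<Longrightarrow> s < t \<Longrightarrow> 0 \<le> f s"
  shows "0 \<le> f t"
proof -
  have "closed ({a..t} \<inter> f -` {0..})"
    by (rule continuous_closed_preimage[OF cont]) auto
  moreover have "{a..<t} \<subseteq> {a..t} \<inter> f -` {0..}"
    using before by auto
  ultimately have "closure {a..<t} \<subseteq> {a..t} \<inter> f -` {0..}"
    by (rule closure_minimal[rotated])
  then show ?thesis
    using \<open>a < t\<close> by (auto simp: closure_atLeastLessThan subset_eq)
qed

locale eco_epidemic_solution =
  fixes r K \<alpha> \<phi> c m\<^sub>1 m\<^sub>2 lam a d \<delta> \<gamma> \<sigma> \<eta> :: real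
    and X S I A :: "real \<Rightarrow> real"
  assumes pos: "r > 0" "K > 0" "\<alpha> > 0" "\<phi> > 0" "c > 0" "m\<^sub>1 > 0" "m\<^sub>2 > 0" "lam > 0"
      "a > 0" "d > 0" "\<delta> > 0" "\<gamma> > 0" "\<sigma> > 0" "\<eta> > 0"
    and m_gt: "m\<^sub>1 > m\<^sub>2"
    and dX: "\<And>t. t \<ge> 0 \<Longrightarrow> (X has_real_derivative
              (r * X t * (1 - X t / K) - \<alpha> * X t * S t / (c + X t) - \<phi> * \<alpha> * X t * I t / (c + X t)))
              (at t within {0..})"
    and dS: "\<And>t. t \<ge> 0 \<Longrightarrow> (S has_real_derivative
              (m\<^sub>1 * \<alpha> * X t * S t / (c + X t) - lam * A t * S t / (a + A t) - d * S t))
              (at t within {0..})"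
    and dI: "\<And>t. t \<ge> 0 \<Longrightarrow> (I has_real_derivative
              (m\<^sub>2 * \<phi> * \<alpha> * X t * I t / (c + X t) + lam * A t * S t / (a + A t) - (d + \<delta>) * I t))
              (at t within {0..})"
    and dA: "\<And>t. t \<ge> 0 \<Longrightarrow> (A has_real_derivative
              (\<gamma> + \<sigma> * (S t + I t) - \<eta> * A t))
              (at t within {0..})"
    and init_nonneg: "0 \<le> X 0" "0 \<le> S 0" "0 \<le> I 0" "0 \<le> A 0"
begin

lemma continuous_on_solution:
  "continuous_on {0..} X" "continuous_on {0..} S" "continuous_on {0..} I" "continuous_on {0..} A"
  unfolding continuous_on_eq_continuous_within
  using dX dS dI dA by (blast intro: DERIV_continuous)+

lemma tendsto_at_right_solution:
  assumes "0 \<le> t"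
  shows "(X \<longlongrightarrow> X t) (at_right t)" "(S \<longlongrightarrow> S t) (at_right t)"
    "(I \<longlongrightarrow> I t) (at_right t)" "(A \<longlongrightarrow> A t) (at_right t)"
proof -
  have "at_right t \<le> at t within {0..}"
    using assms by (auto intro: at_le)
  then show "(X \<longlongrightarrow> X t) (at_right t)" "(S \<longlongrightarrow> S t) (at_right t)"
    "(I \<longlongrightarrow> I t) (at_right t)" "(A \<longlongrightarrow> A t) (at_right t)"
    using continuous_on_solution assms
    by (auto simp: continuous_on_def intro: tendsto_mono)
qed

lemma nonneg_at_right:
  assumes "0 \<le> t" "0 \<le> X t" "0 \<le> S t" "0 \<le> I t" "0 \<le> A t"
  shows "\<forall>\<^sub>F s in at_right t. 0 \<le> X s \<and> 0 \<le> S s \<and> 0 \<le> I s \<and> 0 \<le> A s"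
proof -
  note lim = tendsto_at_right_solution[OF \<open>0 \<le> t\<close>]
  have "c + X t \<noteq> 0" "a + A t \<noteq> 0"
    using pos assms by auto
  have X_nonneg: "\<forall>\<^sub>F s in at_right t. 0 \<le> X s"
  proof (rule eventually_nonneg_at_right[OF \<open>0 \<le> t\<close> \<open>0 \<le> X t\<close> dX])
    show "((\<lambda>s. r * (1 - X s / K) - \<alpha> * S s / (c + X s) - \<phi> * \<alpha> * I s / (c + X s)) \<longlongrightarrow>
        r * (1 - X t / K) - \<alpha> * S t / (c + X t) - \<phi> * \<alpha> * I t / (c + X t)) (at_right t)"
      using lim \<open>c + X t \<noteq> 0\<close> pos by (intro tendsto_intros) auto
  qed (simp_all add: always_eventually algebra_simps)
  have S_nonneg: "\<forall>\<^sub>F s in at_right t. 0 \<le> S s"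
  proof (rule eventually_nonneg_at_right[OF \<open>0 \<le> t\<close> \<open>0 \<le> S t\<close> dS])
    show "((\<lambda>s. m\<^sub>1 * \<alpha> * X s / (c + X s) - lam * A s / (a + A s) - d) \<longlongrightarrow>
        m\<^sub>1 * \<alpha> * X t / (c + X t) - lam * A t / (a + A t) - d) (at_right t)"
      using lim \<open>c + X t \<noteq> 0\<close> \<open>a + A t \<noteq> 0\<close> by (intro tendsto_intros) auto
  qed (simp_all add: always_eventually algebra_simps)
  have A_nonneg: "\<forall>\<^sub>F s in at_right t. 0 \<le> A s"
  proof (rule eventually_nonneg_at_right[OF \<open>0 \<le> t\<close> \<open>0 \<le> A t\<close> dA tendsto_const])
    have "((\<lambda>s. \<gamma> + \<sigma> * (S s + I s)) \<longlongrightarrow> \<gamma> + \<sigma> * (S t + I t)) (at_right t)"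
      using lim by (intro tendsto_intros)
    moreover have "0 < \<gamma> + \<sigma> * (S t + I t)"
      using pos assms by (simp add: add_pos_nonneg)
    ultimately have "\<forall>\<^sub>F s in at_right t. 0 < \<gamma> + \<sigma> * (S s + I s)"
      by (rule order_tendstoD)
    then show "\<forall>\<^sub>F s in at_right t. A s * - \<eta> \<le> \<gamma> + \<sigma> * (S s + I s) - \<eta> * A s"
      by eventually_elim (simp add: algebra_simps)
  qed
  have I_nonneg: "\<forall>\<^sub>F s in at_right t. 0 \<le> I s"
  proof (rule eventually_nonneg_at_right[OF \<open>0 \<le> t\<close> \<open>0 \<le> I t\<close> dI])
    show "((\<lambda>s. m\<^sub>2 * \<phi> * \<alpha> * X s / (c + X s) - (d + \<delta>)) \<longlongrightarrow>
        m\<^sub>2 * \<phi> * \<alpha> * X t / (c + X t) - (d + \<delta>)) (at_right t)"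
      using lim \<open>c + X t \<noteq> 0\<close> by (intro tendsto_intros) auto
    show "\<forall>\<^sub>F s in at_right t. I s * (m\<^sub>2 * \<phi> * \<alpha> * X s / (c + X s) - (d + \<delta>)) \<le>
        m\<^sub>2 * \<phi> * \<alpha> * X s * I s / (c + X s) + lam * A s * S s / (a + A s) - (d + \<delta>) * I s"
      using A_nonneg S_nonneg
    proof eventually_elim
      case (elim s)
      then have "0 \<le> lam * A s * S s / (a + A s)"
        using pos by simp
      then show ?case
        by (simp add: algebra_simps)
    qed
  qed
  show ?thesis
    using X_nonneg S_nonneg I_nonneg A_nonneg by eventually_elim simp
qed

lemma nonneg:
  assumes "0 \<le> t"
  shows "0 \<le> X t \<and> 0 \<le> S t \<and> 0 \<le> I t \<and> 0 \<le> A t"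
  using assms
proof (induction rule: real_induct_right)
  case start
  show ?case
    using init_nonneg by simp
next
  case (left t)
  have "continuous_on {0..t} f" if "continuous_on {0..} f" for f :: "real \<Rightarrow> real"
    using that by (rule continuous_on_subset) auto
  then have "continuous_on {0..t} X" "continuous_on {0..t} S"
    "continuous_on {0..t} I" "continuous_on {0..t} A"
    using continuous_on_solution by blast+
  then show ?case
    using left by (meson nonneg_if_nonneg_before)
next
  case (right t)
  then show ?case
    using nonneg_at_right by blast
qed

definition "M = max (X 0) K"

lemma X_le_M:
  assumes "0 \<le> t"
  shows "X t \<le> M"
  unfolding M_def
proof (rule le_max_if_deriv_nonpos_above[OF dX _ assms])
  fix s :: real assume "0 < s" "K < X s"
  then have "r * X s * (1 - X s / K) \<le> 0"
    using pos by (simp add: mult_nonneg_nonpos)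
  moreover have "0 \<le> \<alpha> * X s * S s / (c + X s)" "0 \<le> \<phi> * \<alpha> * X s * I s / (c + X s)"
    using nonneg[of s] pos \<open>0 < s\<close> \<open>K < X s\<close> by simp_all
  ultimately show "r * X s * (1 - X s / K) - \<alpha> * X s * S s / (c + X s)
      - \<phi> * \<alpha> * X s * I s / (c + X s) \<le> 0"
    by linarith
qed

definition "W t = X t + (S t + I t) / m\<^sub>1"

definition "W' t = r * X t * (1 - X t / K) - (1 - m\<^sub>2 / m\<^sub>1) * \<phi> * \<alpha> * X t * I t / (c + X t)
    - (d * S t + (d + \<delta>) * I t) / m\<^sub>1"

lemma W_has_derivative:
  assumes "0 \<le> t"
  shows "(W has_real_derivative W' t) (at t within {0..})"
proof -
  have cancel: "m\<^sub>1 * \<alpha> * X t * S t / (c + X t) / m\<^sub>1 = \<alpha> * X t * S t / (c + X t)"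
    using pos by simp
  show ?thesis
    unfolding W_def[abs_def]
    by (rule DERIV_cong[OF DERIV_add[OF dX[OF assms]
          DERIV_cdivide[OF DERIV_add[OF dS[OF assms] dI[OF assms]]]]])
      (use pos cancel in \<open>simp add: W'_def add_divide_distrib diff_divide_distrib algebra_simps\<close>)
qed

lemma W'_le:
  assumes "0 \<le> t"
  shows "W' t \<le> (r + d) * M - d * W t"
proof -
  have "0 \<le> (1 - m\<^sub>2 / m\<^sub>1) * \<phi> * \<alpha> * X t * I t / (c + X t)"
    using nonneg[OF assms] pos m_gt by simp
  moreover have "0 \<le> r * X t * (X t / K)" "0 \<le> \<delta> * I t / m\<^sub>1" "r * X t \<le> r * M" "d * X t \<le> d * M"
    using nonneg[OF assms] X_le_M[OF assms] pos by simp_all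
  ultimately show ?thesis
    by (simp add: W'_def W_def algebra_simps add_divide_distrib)
qed

definition "W_max = max (W 0) ((r + d) * M / d)"

lemma W_le_W_max:
  assumes "0 \<le> t"
  shows "W t \<le> W_max"
  unfolding W_max_def
proof (rule le_max_if_deriv_nonpos_above[OF W_has_derivative _ assms])
  fix s :: real assume "0 < s" "(r + d) * M / d < W s"
  then have "(r + d) * M - d * W s < 0"
    using pos by (simp add: field_simps)
  then show "W' s \<le> 0"
    using W'_le[of s] \<open>0 < s\<close> by linarith
qed

lemma S_plus_I_le:
  assumes "0 \<le> t"
  shows "S t + I t \<le> m\<^sub>1 * W_max"
proof -
  have "(S t + I t) / m\<^sub>1 \<le> W_max"
    using W_le_W_max[OF assms] nonneg[OF assms] by (simp add: W_def)
  then show ?thesis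
    using pos by (simp add: field_simps)
qed

definition "A_max = max (A 0) ((\<gamma> + \<sigma> * m\<^sub>1 * W_max) / \<eta>)"

lemma A_le_A_max:
  assumes "0 \<le> t"
  shows "A t \<le> A_max"
  unfolding A_max_def
proof (rule le_max_if_deriv_nonpos_above[OF dA _ assms])
  fix s :: real assume "0 < s" "(\<gamma> + \<sigma> * m\<^sub>1 * W_max) / \<eta> < A s"
  then have "\<gamma> + \<sigma> * m\<^sub>1 * W_max < \<eta> * A s"
    using pos by (simp add: field_simps)
  moreover have "\<sigma> * (S s + I s) \<le> \<sigma> * (m\<^sub>1 * W_max)"
    using S_plus_I_le[of s] \<open>0 < s\<close> pos by simp
  ultimately show "\<gamma> + \<sigma> * (S s + I s) - \<eta> * A s \<le> 0"
    by (simp add: algebra_simps)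
qed

end

theorem theorem1:
  fixes r K \<alpha> \<phi> c m\<^sub>1 m\<^sub>2 lam a d \<delta> \<gamma> \<sigma> \<eta> :: real
    and X S I A :: "real \<Rightarrow> real"
  assumes pos: "r > 0" "K > 0" "\<alpha> > 0" "\<phi> > 0" "c > 0" "m\<^sub>1 > 0" "m\<^sub>2 > 0" "lam > 0"
      "a > 0" "d > 0" "\<delta> > 0" "\<gamma> > 0" "\<sigma> > 0" "\<eta> > 0"
    and \<phi>_lt: "\<phi> < 1"
    and m_gt: "m\<^sub>1 > m\<^sub>2"
    and dX: "\<And>t. t \<ge> 0 \<Longrightarrow> (X has_real_derivative
              (r * X t * (1 - X t / K) - \<alpha> * X t * S t / (c + X t) - \<phi> * \<alpha> * X t * I t / (c + X t)))
              (at t within {0..})"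
    and dS: "\<And>t. t \<ge> 0 \<Longrightarrow> (S has_real_derivative
              (m\<^sub>1 * \<alpha> * X t * S t / (c + X t) - lam * A t * S t / (a + A t) - d * S t))
              (at t within {0..})"
    and dI: "\<And>t. t \<ge> 0 \<Longrightarrow> (I has_real_derivative
              (m\<^sub>2 * \<phi> * \<alpha> * X t * I t / (c + X t) + lam * A t * S t / (a + A t) - (d + \<delta>) * I t))
              (at t within {0..})"
    and dA: "\<And>t. t \<ge> 0 \<Longrightarrow> (A has_real_derivative
              (\<gamma> + \<sigma> * (S t + I t) - \<eta> * A t))
              (at t within {0..})"
    and init: "(X 0, S 0, I 0, A 0) \<in> regionD (max (X 0) K) r d \<sigma> \<eta>"
  shows "\<exists>B. \<forall>t\<ge>0. \<bar>X t\<bar> \<le> B \<and> \<bar>S t\<bar> \<le> B \<and> \<bar>I t\<bar> \<le> B \<and> \<bar>A t\<bar> \<le> B"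
proof -
  interpret eco_epidemic_solution r K \<alpha> \<phi> c m\<^sub>1 m\<^sub>2 lam a d \<delta> \<gamma> \<sigma> \<eta> X S I A
    by (rule eco_epidemic_solution.intro) (use pos m_gt dX dS dI dA init in \<open>auto simp: regionD_def\<close>)
  define B where "B = max M (max (m\<^sub>1 * W_max) A_max)"
  have "\<bar>X t\<bar> \<le> B \<and> \<bar>S t\<bar> \<le> B \<and> \<bar>I t\<bar> \<le> B \<and> \<bar>A t\<bar> \<le> B" if "0 \<le> t" for t
    using nonneg[OF that] X_le_M[OF that] S_plus_I_le[OF that] A_le_A_max[OF that]
    by (auto simp: B_def)
  then show ?thesis
    by blast
qed

end
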